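(* Let $a_1,a_2\ge0$ and $D=D_{a_1,a_2}$. (a) For every horizontal grading $S_1:D_1\to\mathbb{Z}_{\ge0}$ there exist subsets $R\subset Sh\subset D_2$ such that: (i) a vertical grading $S_2:D_2\to\mathbb{Z}_{\ge0}$ forms a compatible pair with $S_1$ if and only if $S_2(v)=0$ for all $v\in Sh\setminus R$ and, for each $h\in\operatorname{supp}(S_1)$ and $v\in R$, at least one of the conditions (HGC), (VGC) holds for $h,v$; (ii) $|Sh|=\min(a_2,|S_1|)$. (b) For every vertical grading $S_2:D_2\to\mathbb{Z}_{\ge0}$ there exist subsets $R\subset Sh\subset D_1$ such that: (i) a horizontal grading $S_1:D_1\to\mathbb{Z}_{\ge0}$ forms a compatible pair with $S_2$ if and only if $S_1(h)=0$ for all $h\in Sh\setminus R$ and, for each $h\in R$ and $v\in\operatorname{supp}(S_2)$, at least one of the conditions (HGC), (VGC) holds for $h,v$; (ii) $|Sh|=\min(a_1,|S_2|)$.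
   Context: Maximal Dyck path: $D=D_{a_1,a_2}$ is the lattice path of unit East and North steps from $(0,0)$ to $(a_1,a_2)$ staying weakly below the diagonal of $[0,a_1]\times[0,a_2]$ and closest to it. $D_1$ and $D_2$ are its sets of horizontal and vertical edges. Identify $(0,0)\equiv(a_1,a_2)$ so $D$ is a cyclic sequence of edges; for edges $e,e'$, $ee'$ is the subpath from $e$ to $e'$ inclusive following $D$ cyclically (wrapping through $(0,0)$ if necessary), $ee$ is $e$ alone, and $(ee')_1,(ee')_2$ are its horizontal and vertical edges. For gradings $S_1:D_1\to\mathbb{Z}_{\ge0}$, $S_2:D_2\to\mathbb{Z}_{\ge0}$, $h\in D_1$, $v\in D_2$: condition (HGC) holds for $h,v$ if there is an edge $e$ with $he$ a proper subpath of $hv$ and $|(he)_2|=\sum_{h'\in(he)_1}S_1(h')$; condition (VGC) holds if there is an edge $e$ with $ev$ a proper subpath of $hv$ and $|(ev)_1|=\sum_{v'\in(ev)_2}S_2(v')$. $(S_1,S_2)$ is a compatible pair if for every $h\in D_1$, $v\in D_2$ at least one of (HGC), (VGC) holds. $|S_i|$ is the sum of the values of $S_i$; $\operatorname{supp}$ denotes the set of edges with nonzero value. *)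

theory Defs
  imports Main
begin

(* The maximal Dyck path D_{a1,a2} is encoded by the positions of its edges along the path:
   edge k (0 \<le> k < a1+a2) is the (k+1)-th step from (0,0).  The i-th horizontal edge
   (0-indexed, i < a1) runs from (i, floor(i*a2/a1)) to (i+1, floor(i*a2/a1)); it is preceded by
   i horizontal and floor(i*a2/a1) vertical edges, so its position is i + i*a2 div a1. *)

definition dyckH :: "nat \<Rightarrow> nat \<Rightarrow> nat set" where
  "dyckH a1 a2 = (\<lambda>i. i + i * a2 div a1) ` {..<a1}"

definition dyckV :: "nat \<Rightarrow> nat \<Rightarrow> nat set" where
  "dyckV a1 a2 = {..<a1 + a2} - dyckH a1 a2"

definition cyc :: "nat \<Rightarrow> nat \<Rightarrow> nat \<Rightarrow> nat set" where
  "cyc n i j = (if i \<le> j then {i..j} else {i..<n} \<union> {..j})"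

definition HGC :: "nat \<Rightarrow> nat \<Rightarrow> (nat \<Rightarrow> nat) \<Rightarrow> nat \<Rightarrow> nat \<Rightarrow> bool" where
  "HGC a1 a2 S1 h v =
     (\<exists>e < a1 + a2. cyc (a1 + a2) h e \<subset> cyc (a1 + a2) h v \<and>
        card (cyc (a1 + a2) h e \<inter> dyckV a1 a2) = (\<Sum>h'\<in>cyc (a1 + a2) h e \<inter> dyckH a1 a2. S1 h'))"

definition VGC :: "nat \<Rightarrow> nat \<Rightarrow> (nat \<Rightarrow> nat) \<Rightarrow> nat \<Rightarrow> nat \<Rightarrow> bool" where
  "VGC a1 a2 S2 h v =
     (\<exists>e < a1 + a2. cyc (a1 + a2) e v \<subset> cyc (a1 + a2) h v \<and>
        card (cyc (a1 + a2) e v \<inter> dyckH a1 a2) = (\<Sum>v'\<in>cyc (a1 + a2) e v \<inter> dyckV a1 a2. S2 v'))"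

(* gradings are functions nat \<Rightarrow> nat; only their values on dyckH resp. dyckV matter *)
definition compatible :: "nat \<Rightarrow> nat \<Rightarrow> (nat \<Rightarrow> nat) \<Rightarrow> (nat \<Rightarrow> nat) \<Rightarrow> bool" where
  "compatible a1 a2 S1 S2 =
     (\<forall>h\<in>dyckH a1 a2. \<forall>v\<in>dyckV a1 a2. HGC a1 a2 S1 h v \<or> VGC a1 a2 S2 h v)"

end

theory Submission
  imports Defs
begin

text \<open>
  Walk once around the cyclic path, counting a horizontal edge with weight S1 and a vertical edge
  with weight -1. (HGC) fails for h and v exactly when no proper initial piece of the arc from h
  to v is balanced; if S1 h > 0 the partial sums then start positive, drop by at most one per
  step and never vanish, so the walk reaches v with positive running sum. Unrolling the cycle
  twice, the maximal suffix sum of the walk is a potential that loses one at each such vertical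
  edge and gains only the horizontal weights, so at most |S1| vertical edges fail (HGC) for some
  h in the support of S1. Any set Sh of size min(a2, |S1|) containing them, taken with R = Sh,
  satisfies part (a). Condition (VGC) is (HGC) on the reversed path, which gives part (b).
\<close>

section \<open>Maximal suffix sums\<close>

primrec max_suffix_sum :: "(nat \<Rightarrow> int) \<Rightarrow> nat \<Rightarrow> int" where
  "max_suffix_sum W 0 = 0"
| "max_suffix_sum W (Suc k) = max 0 (max_suffix_sum W k + W k)"

lemma max_suffix_sum_nonneg: "0 \<le> max_suffix_sum W k"
  by (cases k) auto

lemma sum_le_max_suffix_sum: "s \<le> k \<Longrightarrow> (\<Sum>i\<in>{s..<k}. W i) \<le> max_suffix_sum W k"
proof (induction k)
  case (Suc k)
  show ?case
  proof (cases "s = Suc k")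
    case False
    then have "(\<Sum>i\<in>{s..<Suc k}. W i) = (\<Sum>i\<in>{s..<k}. W i) + W k"
      using Suc.prems by simp
    also have "\<dots> \<le> max_suffix_sum W k + W k"
      using False Suc by simp
    finally show ?thesis by simp
  qed (simp add: max_suffix_sum_nonneg)
qed simp

lemma max_suffix_sum_attained: "\<exists>s\<le>k. max_suffix_sum W k = (\<Sum>i\<in>{s..<k}. W i)"
proof (induction k)
  case (Suc k)
  then obtain s where s: "s \<le> k" "max_suffix_sum W k = (\<Sum>i\<in>{s..<k}. W i)" by blast
  show ?case
  proof (cases "max_suffix_sum W k + W k \<le> 0")
    case True
    then show ?thesis by (intro exI[of _ "Suc k"]) simp
  next
    case False
    then show ?thesis using s by (intro exI[of _ s]) simp
  qed
qed simp

text \<open>A down step taken at positive potential lowers the potential by one; any other step raises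
  it by at most its weight.\<close>

lemma card_positive_down_steps_le:
  fixes W :: "nat \<Rightarrow> int"
  assumes down: "\<And>i. D i \<Longrightarrow> W i = -1" and up: "\<And>i. \<not> D i \<Longrightarrow> 0 \<le> W i"
    and "k0 \<le> k1"
  shows "int (card {j\<in>{k0..<k1}. D j \<and> 0 < max_suffix_sum W j}) + max_suffix_sum W k1
           \<le> max_suffix_sum W k0 + (\<Sum>i\<in>{k0..<k1}. if D i then 0 else W i)"
  using \<open>k0 \<le> k1\<close>
proof (induction k1 rule: dec_induct)
  case (step k)
  let ?C = "\<lambda>k. {j\<in>{k0..<k}. D j \<and> 0 < max_suffix_sum W j}"
  have C: "?C (Suc k) = (if D k \<and> 0 < max_suffix_sum W k then insert k (?C k) else ?C k)"
    using step.hyps by (auto simp: less_Suc_eq)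
  have "card (?C (Suc k)) = (if D k \<and> 0 < max_suffix_sum W k then Suc (card (?C k)) else card (?C k))"
    unfolding C by auto
  moreover have "(\<Sum>i\<in>{k0..<Suc k}. if D i then 0 else W i)
      = (\<Sum>i\<in>{k0..<k}. if D i then 0 else W i) + (if D k then 0 else W k)"
    using step.hyps by simp
  ultimately show ?case
    using step.IH down[of k] up[of k] max_suffix_sum_nonneg[of W k]
    by (cases "D k") (auto split: if_splits)
qed simp

section \<open>Cyclic arcs\<close>

lemma finite_cyc: "finite (cyc n x y)"
  by (simp add: cyc_def)

lemma cyc_subset_lessThan: "x < n \<Longrightarrow> y < n \<Longrightarrow> cyc n x y \<subseteq> {..<n}"
  by (auto simp: cyc_def)

lemma cyc_same [simp]: "cyc n x x = {x}"
  by (simp add: cyc_def)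

lemma ends_mem_cyc: "x < n \<Longrightarrow> y < n \<Longrightarrow> x \<in> cyc n x y \<and> y \<in> cyc n x y"
  by (auto simp: cyc_def)

lemma cyc_Suc_mod:
  assumes "x < n" "y < n" "Suc y mod n \<noteq> x"
  shows "cyc n x (Suc y mod n) = insert (Suc y mod n) (cyc n x y)"
proof (cases "Suc y = n")
  case True
  then show ?thesis using assms by (auto simp: cyc_def)
next
  case False
  then have "Suc y mod n = Suc y" using assms by simp
  then show ?thesis using assms by (auto simp: cyc_def)
qed

lemma inj_on_mod_interval:
  fixes k s n :: nat
  assumes "k < s + n" shows "inj_on (\<lambda>i. i mod n) {s..k}"
proof (intro linorder_inj_onI')
  fix i j assume "i \<in> {s..k}" "j \<in> {s..k}" "i < j"
  then have "0 < j - i" "j - i < n" using assms by auto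
  then have "\<not> n dvd j - i" using nat_dvd_not_less by blast
  then show "i mod n \<noteq> j mod n"
    using mod_eq_dvd_iff_nat[of i j n] \<open>i < j\<close> by auto
qed

lemma cyc_mod_eq_image:
  "s \<le> k \<Longrightarrow> k < s + (n::nat) \<Longrightarrow> cyc n (s mod n) (k mod n) = (\<lambda>i. i mod n) ` {s..k}"
proof (induction k rule: dec_induct)
  case (step k)
  have "Suc k mod n \<noteq> s mod n"
    using inj_on_mod_interval[OF step.prems] step.hyps by (auto dest: inj_onD)
  moreover have "Suc k mod n = Suc (k mod n) mod n"
    by (simp add: mod_Suc_eq)
  moreover have "0 < n" using step by simp
  ultimately have "cyc n (s mod n) (Suc k mod n) = insert (Suc k mod n) (cyc n (s mod n) (k mod n))"
    using cyc_Suc_mod[of "s mod n" n "k mod n"] by simp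
  moreover have "{s..Suc k} = insert (Suc k) {s..k}"
    using step.hyps by auto
  ultimately show ?case
    using step by simp
qed simp

section \<open>Balanced arcs of a weighted cycle\<close>

definition walk_weight :: "nat set \<Rightarrow> (nat \<Rightarrow> nat) \<Rightarrow> nat \<Rightarrow> int" where
  "walk_weight Q t x = (if x \<in> Q then -1 else int (t x))"

lemma sum_walk_weight:
  assumes "P \<inter> Q = {}" "C \<subseteq> P \<union> Q" "finite C"
  shows "(\<Sum>x\<in>C. walk_weight Q t x) = int (\<Sum>x\<in>C \<inter> P. t x) - int (card (C \<inter> Q))"
proof -
  have "C - P = C \<inter> Q" using assms by blast
  then have "(\<Sum>x\<in>C. walk_weight Q t x)
      = (\<Sum>x\<in>C \<inter> P. walk_weight Q t x) + (\<Sum>x\<in>C \<inter> Q. walk_weight Q t x)"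
    using sum.Int_Diff[OF assms(3), of _ P] by simp
  moreover have "(\<Sum>x\<in>C \<inter> P. walk_weight Q t x) = (\<Sum>x\<in>C \<inter> P. int (t x))"
    using assms(1) by (intro sum.cong) (auto simp: walk_weight_def)
  ultimately show ?thesis by (simp add: walk_weight_def)
qed

definition no_balanced_prefix :: "nat \<Rightarrow> nat set \<Rightarrow> nat set \<Rightarrow> (nat \<Rightarrow> nat) \<Rightarrow> nat \<Rightarrow> nat \<Rightarrow> bool" where
  "no_balanced_prefix n P Q t p q \<longleftrightarrow>
     (\<forall>e<n. cyc n p e \<subset> cyc n p q \<longrightarrow> card (cyc n p e \<inter> Q) \<noteq> (\<Sum>x\<in>cyc n p e \<inter> P. t x))"

lemma no_balanced_prefix_imp_max_suffix_sum_pos: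
  assumes PQ: "P \<inter> Q = {}" "P \<union> Q = {..<n}"
    and p: "p \<in> P" "t p \<noteq> 0" and q: "q \<in> Q"
    and no_bal: "no_balanced_prefix n P Q t p q"
  shows "0 < max_suffix_sum (\<lambda>i. walk_weight Q t (i mod n)) (q + n)"
proof -
  let ?W = "\<lambda>i. walk_weight Q t (i mod n)"
  have "p < n" "q < n" "p \<noteq> q" using PQ p q by auto
  \<comment> \<open>the lift of p below q + n, so that the arc from p to q is the interval {s..q + n} mod n\<close>
  define s where "s = (if p < q then p + n else p)"
  have s: "s mod n = p" "q < s" "s < q + n"
    using \<open>p < n\<close> \<open>q < n\<close> \<open>p \<noteq> q\<close> by (auto simp: s_def)
  have arc: "cyc n p (e mod n) = (\<lambda>i. i mod n) ` {s..e}" if "s \<le> e" "e \<le> q + n" for e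
    using cyc_mod_eq_image[of s e n] that s by simp
  have inj: "inj_on (\<lambda>i. i mod n) {s..q + n}"
    using s by (intro inj_on_mod_interval) simp
  have nonzero: "(\<Sum>i\<in>{s..e}. ?W i) \<noteq> 0" if "s \<le> e" "e < q + n" for e
  proof -
    let ?C = "cyc n p (e mod n)"
    have "{s..e} \<subset> {s..q + n}" using that by auto
    then have "?C \<subset> cyc n p q"
      using arc[of e] arc[of "q + n"] that \<open>q < n\<close> image_strict_mono[OF inj] by simp
    then have "card (?C \<inter> Q) \<noteq> (\<Sum>x\<in>?C \<inter> P. t x)"
      using no_bal \<open>p < n\<close> that by (simp add: no_balanced_prefix_def)
    moreover have "(\<Sum>i\<in>{s..e}. ?W i) = (\<Sum>x\<in>?C. walk_weight Q t x)"
      using arc[of e] that inj_on_subset[OF inj, of "{s..e}"]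
      by (simp add: sum.reindex)
    moreover have "?C \<subseteq> P \<union> Q"
      using cyc_subset_lessThan[of p n "e mod n"] \<open>p < n\<close> PQ(2) by simp
    ultimately show ?thesis
      using sum_walk_weight[OF PQ(1) _ finite_cyc] by (simp flip: of_nat_sum)
  qed
  have pos: "0 < (\<Sum>i\<in>{s..e}. ?W i)" if "s \<le> e" "e < q + n" for e
    using that
  proof (induction e rule: dec_induct)
    case base
    then show ?case using s(1) p PQ(1) by (auto simp: walk_weight_def)
  next
    case (step e)
    then have "(\<Sum>i\<in>{s..Suc e}. ?W i) = (\<Sum>i\<in>{s..e}. ?W i) + ?W (Suc e)"
      by simp
    moreover have "-1 \<le> ?W (Suc e)" by (simp add: walk_weight_def)
    ultimately show ?case using step nonzero[of "Suc e"] by linarith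
  qed
  have "(\<Sum>i\<in>{s..<q + n}. ?W i) = (\<Sum>i\<in>{s..q + n - 1}. ?W i)"
    using s by (intro sum.cong) auto
  also have "\<dots> > 0" using pos s by simp
  finally show ?thesis
    using sum_le_max_suffix_sum[of s "q + n" ?W] s by simp
qed

lemma card_no_balanced_prefix_le:
  assumes PQ: "P \<inter> Q = {}" "P \<union> Q = {..<n}"
  shows "card {q\<in>Q. \<exists>p\<in>P. t p \<noteq> 0 \<and> no_balanced_prefix n P Q t p q} \<le> (\<Sum>p\<in>P. t p)"
    (is "card ?B \<le> _")
proof -
  let ?W = "\<lambda>i. walk_weight Q t (i mod n)"
  let ?M = "max_suffix_sum ?W"
  let ?D = "\<lambda>j. j mod n \<in> Q"
  \<comment> \<open>Unroll the cycle twice: each failure q is a down step q + n of the second period taken at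
    positive potential, and over the first period the potential cannot decrease.\<close>
  have "?M n \<le> ?M (n + n)"
  proof -
    obtain s where "s \<le> n" and "?M n = (\<Sum>i\<in>{s..<n}. ?W i)"
      using max_suffix_sum_attained by blast
    note this(2)
    also have "\<dots> = (\<Sum>i\<in>{s + n..<n + n}. ?W i)"
      by (simp add: sum.shift_bounds_nat_ivl)
    also have "\<dots> \<le> ?M (n + n)"
      using \<open>s \<le> n\<close> by (intro sum_le_max_suffix_sum) simp
    finally show ?thesis .
  qed
  moreover have "int (card {j\<in>{n..<n + n}. ?D j \<and> 0 < ?M j}) + ?M (n + n)
      \<le> ?M n + (\<Sum>i\<in>{n..<n + n}. if ?D i then 0 else ?W i)"
    by (rule card_positive_down_steps_le) (auto simp: walk_weight_def)
  moreover have "(\<Sum>i\<in>{n..<n + n}. if ?D i then 0 else ?W i) = int (\<Sum>p\<in>P. t p)"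
  proof -
    have "(\<Sum>i\<in>{n..<n + n}. if ?D i then 0 else ?W i)
        = (\<Sum>i\<in>{..<n}. if ?D (i + n) then 0 else ?W (i + n))"
      using sum.shift_bounds_nat_ivl[of "\<lambda>i. if ?D i then 0 else ?W i" 0 n n]
      by (simp add: atLeast0LessThan)
    also have "\<dots> = (\<Sum>i\<in>{..<n}. if i \<in> Q then 0 else int (t i))"
      by (intro sum.cong) (auto simp: walk_weight_def)
    also have "\<dots> = (\<Sum>i\<in>{..<n} \<inter> - Q. int (t i))"
      by (simp add: sum.If_cases)
    also have "{..<n} \<inter> - Q = P"
      using PQ by blast
    finally show ?thesis by simp
  qed
  moreover have "card ?B \<le> card {j\<in>{n..<n + n}. ?D j \<and> 0 < ?M j}"
  proof -
    have "(\<lambda>q. q + n) ` ?B \<subseteq> {j\<in>{n..<n + n}. ?D j \<and> 0 < ?M j}"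
    proof (rule image_subsetI)
      fix q assume "q \<in> ?B"
      then have "q < n" "0 < ?M (q + n)"
        using PQ no_balanced_prefix_imp_max_suffix_sum_pos[OF PQ] by auto
      then show "q + n \<in> {j\<in>{n..<n + n}. ?D j \<and> 0 < ?M j}"
        using \<open>q \<in> ?B\<close> by simp
    qed
    then have "card ((\<lambda>q. q + n) ` ?B) \<le> card {j\<in>{n..<n + n}. ?D j \<and> 0 < ?M j}"
      by (intro card_mono) auto
    then show ?thesis by (simp add: card_image)
  qed
  ultimately show ?thesis by linarith
qed

definition no_balanced_suffix :: "nat \<Rightarrow> nat set \<Rightarrow> nat set \<Rightarrow> (nat \<Rightarrow> nat) \<Rightarrow> nat \<Rightarrow> nat \<Rightarrow> bool" where
  "no_balanced_suffix n P Q t p q \<longleftrightarrow>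
     (\<forall>e<n. cyc n e p \<subset> cyc n q p \<longrightarrow> card (cyc n e p \<inter> Q) \<noteq> (\<Sum>x\<in>cyc n e p \<inter> P. t x))"

definition mirror :: "nat \<Rightarrow> nat \<Rightarrow> nat" where
  "mirror n x = n - Suc x"

lemma mirror_less [simp]: "x < n \<Longrightarrow> mirror n x < n"
  by (simp add: mirror_def)

lemma mirror_mirror [simp]: "x < n \<Longrightarrow> mirror n (mirror n x) = x"
  by (simp add: mirror_def)

lemma inj_on_mirror: "inj_on (mirror n) {..<n}"
  by (metis inj_onI lessThan_iff mirror_mirror)

lemma mirror_image_mirror_image: "A \<subseteq> {..<n} \<Longrightarrow> mirror n ` mirror n ` A = A"
  by (force simp: image_image subset_iff)

lemma mirror_image_subset: "A \<subseteq> {..<n} \<Longrightarrow> mirror n ` A \<subseteq> {..<n}"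
  by auto

lemma mirror_image_lessThan: "mirror n ` {..<n} = {..<n}"
  by (metis mirror_image_mirror_image mirror_image_subset image_mono order_refl subset_antisym)

lemma cyc_mirror:
  assumes "x < n" "y < n"
  shows "mirror n ` cyc n x y = cyc n (mirror n y) (mirror n x)"
proof -
  have "z \<in> cyc n (mirror n y) (mirror n x) \<longleftrightarrow> mirror n z \<in> cyc n x y" if "z < n" for z
    using assms that by (auto simp: cyc_def mirror_def)
  moreover have "cyc n x y \<subseteq> {..<n}" "cyc n (mirror n y) (mirror n x) \<subseteq> {..<n}"
    using assms by (simp_all add: cyc_subset_lessThan)
  ultimately show ?thesis
    by (auto simp: image_iff) (metis lessThan_iff mirror_less mirror_mirror subsetD)+
qed

lemma no_balanced_suffix_iff_mirror:
  assumes PQ: "P \<subseteq> {..<n}" "Q \<subseteq> {..<n}" and "p < n" "q < n"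
  shows "no_balanced_suffix n P Q t p q \<longleftrightarrow>
    no_balanced_prefix n (mirror n ` P) (mirror n ` Q) (t \<circ> mirror n) (mirror n p) (mirror n q)"
proof -
  let ?m = "mirror n"
  have inj: "inj_on ?m A" if "A \<subseteq> {..<n}" for A
    using inj_on_subset[OF inj_on_mirror that] .
  have pointwise: "(cyc n e p \<subset> cyc n q p \<longrightarrow> card (cyc n e p \<inter> Q) \<noteq> (\<Sum>x\<in>cyc n e p \<inter> P. t x)) \<longleftrightarrow>
      (cyc n (?m p) (?m e) \<subset> cyc n (?m p) (?m q) \<longrightarrow>
        card (cyc n (?m p) (?m e) \<inter> ?m ` Q) \<noteq> (\<Sum>x\<in>cyc n (?m p) (?m e) \<inter> ?m ` P. (t \<circ> ?m) x))"
    if "e < n" for e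
  proof -
    let ?A = "cyc n e p" and ?B = "cyc n q p"
    have AB: "?A \<subseteq> {..<n}" "?B \<subseteq> {..<n}"
      using that assms by (simp_all add: cyc_subset_lessThan)
    have "?m ` ?A = cyc n (?m p) (?m e)" "?m ` ?B = cyc n (?m p) (?m q)"
      using that assms by (simp_all add: cyc_mirror)
    moreover have "?A \<subset> ?B \<longleftrightarrow> ?m ` ?A \<subset> ?m ` ?B"
      by (metis AB image_strict_mono inj mirror_image_mirror_image mirror_image_subset)
    moreover have "?m ` ?A \<inter> ?m ` X = ?m ` (?A \<inter> X)" if "X \<subseteq> {..<n}" for X
      using AB that by (simp add: inj_on_image_Int[OF inj_on_mirror])
    moreover have "card (?m ` (?A \<inter> Q)) = card (?A \<inter> Q)"
      using AB by (intro card_image inj) auto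
    moreover have "(\<Sum>x\<in>?m ` (?A \<inter> P). (t \<circ> ?m) x) = (\<Sum>x\<in>?A \<inter> P. t x)"
      using AB by (subst sum.reindex) (auto intro!: inj sum.cong)
    ultimately show ?thesis using PQ by simp
  qed
  have reindex: "(\<forall>e<n. R e) \<longleftrightarrow> (\<forall>e<n. R (?m e))" for R
    by (metis mirror_less mirror_mirror)
  show ?thesis
    unfolding no_balanced_suffix_def no_balanced_prefix_def
    by (subst (2) reindex) (simp add: pointwise)
qed

lemma card_no_balanced_suffix_le:
  assumes PQ: "P \<inter> Q = {}" "P \<union> Q = {..<n}"
  shows "card {q\<in>Q. \<exists>p\<in>P. t p \<noteq> 0 \<and> no_balanced_suffix n P Q t p q} \<le> (\<Sum>p\<in>P. t p)"
    (is "card ?B \<le> _")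
proof -
  let ?m = "mirror n"
  let ?B' = "{q\<in>?m ` Q. \<exists>p\<in>?m ` P. (t \<circ> ?m) p \<noteq> 0 \<and>
      no_balanced_prefix n (?m ` P) (?m ` Q) (t \<circ> ?m) p q}"
  have P: "P \<subseteq> {..<n}" and Q: "Q \<subseteq> {..<n}" using PQ by auto
  have "?B \<subseteq> ?m ` ?B'"
  proof
    fix q assume "q \<in> ?B"
    then obtain p where p: "p \<in> P" "t p \<noteq> 0" and q: "q \<in> Q"
      and no_bal: "no_balanced_suffix n P Q t p q" by blast
    have "p < n" "q < n" using p q P Q by auto
    then have "no_balanced_prefix n (?m ` P) (?m ` Q) (t \<circ> ?m) (?m p) (?m q)"
      using no_balanced_suffix_iff_mirror[OF P Q] no_bal by simp
    moreover have "(t \<circ> ?m) (?m p) \<noteq> 0"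
      using p \<open>p < n\<close> by simp
    ultimately have "?m q \<in> ?B'"
      using p q by blast
    moreover have "q = ?m (?m q)" using \<open>q < n\<close> by simp
    ultimately show "q \<in> ?m ` ?B'" by (rule rev_image_eqI)
  qed
  moreover have "finite ?B'"
    using finite_subset[OF Q] by simp
  ultimately have "card ?B \<le> card ?B'"
    using card_mono[of "?m ` ?B'" ?B] card_image_le[of ?B' ?m] by simp
  also have "\<dots> \<le> (\<Sum>p\<in>?m ` P. (t \<circ> ?m) p)"
  proof (rule card_no_balanced_prefix_le)
    have "?m ` P \<inter> ?m ` Q = ?m ` (P \<inter> Q)"
      by (rule inj_on_image_Int[OF inj_on_mirror P Q, symmetric])
    then show "?m ` P \<inter> ?m ` Q = {}" using PQ by simp
    have "?m ` P \<union> ?m ` Q = ?m ` {..<n}"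
      using PQ(2) by (metis image_Un)
    then show "?m ` P \<union> ?m ` Q = {..<n}"
      by (simp add: mirror_image_lessThan)
  qed
  also have "\<dots> = (\<Sum>p\<in>P. t (?m (?m p)))"
    by (simp add: sum.reindex inj_on_subset[OF inj_on_mirror P])
  also have "\<dots> = (\<Sum>p\<in>P. t p)"
    using P by (intro sum.cong) auto
  finally show ?thesis .
qed

section \<open>The maximal Dyck path\<close>

lemma dyckH_subset: "dyckH a1 a2 \<subseteq> {..<a1 + a2}"
proof
  fix x assume "x \<in> dyckH a1 a2"
  then obtain i where i: "i < a1" "x = i + i * a2 div a1" by (auto simp: dyckH_def)
  have "i * a2 div a1 \<le> a1 * a2 div a1"
    using i by (intro div_le_mono mult_le_mono1) simp
  then show "x \<in> {..<a1 + a2}" using i by simp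
qed

lemma dyckH_Int_dyckV: "dyckH a1 a2 \<inter> dyckV a1 a2 = {}"
  by (auto simp: dyckV_def)

lemma dyckH_Un_dyckV: "dyckH a1 a2 \<union> dyckV a1 a2 = {..<a1 + a2}"
  using dyckH_subset by (auto simp: dyckV_def)

lemma finite_dyckH: "finite (dyckH a1 a2)"
  by (simp add: dyckH_def)

lemma finite_dyckV: "finite (dyckV a1 a2)"
  by (simp add: dyckV_def)

lemma card_dyckH: "card (dyckH a1 a2) = a1"
proof -
  have "strict_mono (\<lambda>i. i + i * a2 div a1)"
    by (intro strict_monoI add_less_le_mono div_le_mono mult_le_mono1) simp_all
  then show ?thesis
    unfolding dyckH_def by (simp add: card_image strict_mono_imp_inj_on)
qed

lemma card_dyckV: "card (dyckV a1 a2) = a2"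
  using dyckH_subset card_dyckH unfolding dyckV_def
  by (subst card_Diff_subset) (auto intro: finite_subset)

lemma HGC_iff_not_no_balanced_prefix:
  "HGC a1 a2 S1 h v \<longleftrightarrow> \<not> no_balanced_prefix (a1 + a2) (dyckH a1 a2) (dyckV a1 a2) S1 h v"
  by (auto simp: HGC_def no_balanced_prefix_def)

lemma VGC_iff_not_no_balanced_suffix:
  "VGC a1 a2 S2 h v \<longleftrightarrow> \<not> no_balanced_suffix (a1 + a2) (dyckV a1 a2) (dyckH a1 a2) S2 v h"
  by (auto simp: VGC_def no_balanced_suffix_def)

lemma HGC_if_zero:
  assumes "h \<in> dyckH a1 a2" "v \<in> dyckV a1 a2" "S1 h = 0"
  shows "HGC a1 a2 S1 h v"
proof -
  have "h < a1 + a2" "v < a1 + a2" "h \<noteq> v"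
    using assms dyckH_Int_dyckV dyckH_Un_dyckV by blast+
  then have "cyc (a1 + a2) h h \<subset> cyc (a1 + a2) h v"
    using ends_mem_cyc[of h "a1 + a2" v] by auto
  moreover have "card ({h} \<inter> dyckV a1 a2) = (\<Sum>h'\<in>{h} \<inter> dyckH a1 a2. S1 h')"
    using assms dyckH_Int_dyckV by auto
  ultimately show ?thesis
    unfolding HGC_def using \<open>h < a1 + a2\<close> by (intro exI[of _ h]) simp
qed

lemma VGC_if_zero:
  assumes "h \<in> dyckH a1 a2" "v \<in> dyckV a1 a2" "S2 v = 0"
  shows "VGC a1 a2 S2 h v"
proof -
  have "h < a1 + a2" "v < a1 + a2" "h \<noteq> v"
    using assms dyckH_Int_dyckV dyckH_Un_dyckV by blast+
  then have "cyc (a1 + a2) v v \<subset> cyc (a1 + a2) h v"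
    using ends_mem_cyc[of h "a1 + a2" v] by auto
  moreover have "card ({v} \<inter> dyckH a1 a2) = (\<Sum>v'\<in>{v} \<inter> dyckV a1 a2. S2 v')"
    using assms dyckH_Int_dyckV by auto
  ultimately show ?thesis
    unfolding VGC_def using \<open>v < a1 + a2\<close> by (intro exI[of _ v]) simp
qed

definition HGC_failures :: "nat \<Rightarrow> nat \<Rightarrow> (nat \<Rightarrow> nat) \<Rightarrow> nat set" where
  "HGC_failures a1 a2 S1 = {v\<in>dyckV a1 a2. \<exists>h\<in>dyckH a1 a2. S1 h \<noteq> 0 \<and> \<not> HGC a1 a2 S1 h v}"

definition VGC_failures :: "nat \<Rightarrow> nat \<Rightarrow> (nat \<Rightarrow> nat) \<Rightarrow> nat set" where
  "VGC_failures a1 a2 S2 = {h\<in>dyckH a1 a2. \<exists>v\<in>dyckV a1 a2. S2 v \<noteq> 0 \<and> \<not> VGC a1 a2 S2 h v}"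

lemma card_HGC_failures_le: "card (HGC_failures a1 a2 S1) \<le> (\<Sum>h\<in>dyckH a1 a2. S1 h)"
  using card_no_balanced_prefix_le[OF dyckH_Int_dyckV dyckH_Un_dyckV, where t = S1]
  by (simp add: HGC_failures_def HGC_iff_not_no_balanced_prefix)

lemma card_VGC_failures_le: "card (VGC_failures a1 a2 S2) \<le> (\<Sum>v\<in>dyckV a1 a2. S2 v)"
  using card_no_balanced_suffix_le[of "dyckV a1 a2" "dyckH a1 a2" "a1 + a2" S2]
    dyckH_Int_dyckV dyckH_Un_dyckV
  by (simp add: VGC_failures_def VGC_iff_not_no_balanced_suffix Int_commute Un_commute)

lemma compatible_iff_if_HGC_failures_subset:
  assumes "HGC_failures a1 a2 S1 \<subseteq> Sh" "Sh \<subseteq> dyckV a1 a2"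
  shows "compatible a1 a2 S1 S2 \<longleftrightarrow>
    (\<forall>h\<in>{h\<in>dyckH a1 a2. S1 h \<noteq> 0}. \<forall>v\<in>Sh. HGC a1 a2 S1 h v \<or> VGC a1 a2 S2 h v)"
  using assms HGC_if_zero[of _ a1 a2 _ S1] unfolding compatible_def HGC_failures_def by blast

lemma compatible_iff_if_VGC_failures_subset:
  assumes "VGC_failures a1 a2 S2 \<subseteq> Sh" "Sh \<subseteq> dyckH a1 a2"
  shows "compatible a1 a2 S1 S2 \<longleftrightarrow>
    (\<forall>h\<in>Sh. \<forall>v\<in>{v\<in>dyckV a1 a2. S2 v \<noteq> 0}. HGC a1 a2 S1 h v \<or> VGC a1 a2 S2 h v)"
  using assms VGC_if_zero[of _ a1 a2 _ S2] unfolding compatible_def VGC_failures_def by blast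

lemma compatible_pairs_with_horizontal_grading:
  "\<exists>R Sh. R \<subseteq> Sh \<and> Sh \<subseteq> dyckV a1 a2 \<and>
      (\<forall>S2. compatible a1 a2 S1 S2 \<longleftrightarrow>
          ((\<forall>v\<in>Sh - R. S2 v = 0) \<and>
           (\<forall>h\<in>{h\<in>dyckH a1 a2. S1 h \<noteq> 0}. \<forall>v\<in>R. HGC a1 a2 S1 h v \<or> VGC a1 a2 S2 h v))) \<and>
      card Sh = min a2 (\<Sum>h\<in>dyckH a1 a2. S1 h)"
proof -
  have sub: "HGC_failures a1 a2 S1 \<subseteq> dyckV a1 a2"
    by (auto simp: HGC_failures_def)
  then have card_le: "card (HGC_failures a1 a2 S1) \<le> min a2 (\<Sum>h\<in>dyckH a1 a2. S1 h)"
    using card_mono[OF finite_dyckV sub] card_dyckV card_HGC_failures_le by simp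
  then obtain Sh where Sh: "HGC_failures a1 a2 S1 \<subseteq> Sh" "Sh \<subseteq> dyckV a1 a2"
      "card Sh = min a2 (\<Sum>h\<in>dyckH a1 a2. S1 h)"
    using exists_subset_between[OF card_le _ sub finite_dyckV] card_dyckV by auto
  then show ?thesis
    using compatible_iff_if_HGC_failures_subset[OF Sh(1,2)] by (intro exI[of _ Sh]) simp
qed

lemma compatible_pairs_with_vertical_grading:
  "\<exists>R Sh. R \<subseteq> Sh \<and> Sh \<subseteq> dyckH a1 a2 \<and>
      (\<forall>S1. compatible a1 a2 S1 S2 \<longleftrightarrow>
          ((\<forall>h\<in>Sh - R. S1 h = 0) \<and>
           (\<forall>h\<in>R. \<forall>v\<in>{v\<in>dyckV a1 a2. S2 v \<noteq> 0}. HGC a1 a2 S1 h v \<or> VGC a1 a2 S2 h v))) \<and>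
      card Sh = min a1 (\<Sum>v\<in>dyckV a1 a2. S2 v)"
proof -
  have sub: "VGC_failures a1 a2 S2 \<subseteq> dyckH a1 a2"
    by (auto simp: VGC_failures_def)
  then have card_le: "card (VGC_failures a1 a2 S2) \<le> min a1 (\<Sum>v\<in>dyckV a1 a2. S2 v)"
    using card_mono[OF finite_dyckH sub] card_dyckH card_VGC_failures_le by simp
  then obtain Sh where Sh: "VGC_failures a1 a2 S2 \<subseteq> Sh" "Sh \<subseteq> dyckH a1 a2"
      "card Sh = min a1 (\<Sum>v\<in>dyckV a1 a2. S2 v)"
    using exists_subset_between[OF card_le _ sub finite_dyckH] card_dyckH by auto
  then show ?thesis
    using compatible_iff_if_VGC_failures_subset[OF Sh(1,2)] by (intro exI[of _ Sh]) simp
qed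

theorem lemma4p4:
  fixes a1 a2 :: nat
  shows
  "(\<forall>S1 :: nat \<Rightarrow> nat. \<exists>R Sh. R \<subseteq> Sh \<and> Sh \<subseteq> dyckV a1 a2 \<and>
      (\<forall>S2 :: nat \<Rightarrow> nat. compatible a1 a2 S1 S2 \<longleftrightarrow>
          ((\<forall>v\<in>Sh - R. S2 v = 0) \<and>
           (\<forall>h\<in>{h\<in>dyckH a1 a2. S1 h \<noteq> 0}. \<forall>v\<in>R. HGC a1 a2 S1 h v \<or> VGC a1 a2 S2 h v))) \<and>
      card Sh = min a2 (\<Sum>h\<in>dyckH a1 a2. S1 h))
   \<and>
   (\<forall>S2 :: nat \<Rightarrow> nat. \<exists>R Sh. R \<subseteq> Sh \<and> Sh \<subseteq> dyckH a1 a2 \<and>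
      (\<forall>S1 :: nat \<Rightarrow> nat. compatible a1 a2 S1 S2 \<longleftrightarrow>
          ((\<forall>h\<in>Sh - R. S1 h = 0) \<and>
           (\<forall>h\<in>R. \<forall>v\<in>{v\<in>dyckV a1 a2. S2 v \<noteq> 0}. HGC a1 a2 S1 h v \<or> VGC a1 a2 S2 h v))) \<and>
      card Sh = min a1 (\<Sum>v\<in>dyckV a1 a2. S2 v))"
  by (intro conjI allI compatible_pairs_with_horizontal_grading
      compatible_pairs_with_vertical_grading)

end
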